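(* Let $U$ be a $\kappa$-cut that is not $(\mathrm{I},\kappa-1)$-small and has at least three sides. Then every other $\kappa$-cut $W$ either is a laminar cut of $U$ (i.e. $W\subseteq U\cup A$ for some side $A$ of $U$) or is itself $(\mathrm{I},\kappa-1)$-small.
   Context: $G=(V,E)$ is a finite, simple, connected, undirected, non-complete graph with $n=|V|$; $\kappa$ is its vertex connectivity, assumed to satisfy $\kappa<n/4$. A cut is a set $U\subset V$ whose removal disconnects $G$; a $\kappa$-cut is a cut of size $\kappa$. A side of a cut $U$ is a connected component of the subgraph induced on $V\setminus U$. A cut $U$ with sides $A_1,\dots,A_a$ is $(\mathrm{I},t)$-small if there is an index $i^\sharp$ with $\sum_{i\neq i^\sharp}|A_i|\le t$. A cut $W$ is a laminar cut of $U$ if $W\subseteq U\cup A$ for some side $A$ of $U$. *)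

theory Defs
  imports Main
begin

definition simple_graph :: "'a set \<Rightarrow> ('a \<Rightarrow> 'a \<Rightarrow> bool) \<Rightarrow> bool" where
  "simple_graph V E \<longleftrightarrow> finite V \<and> (\<forall>x y. E x y \<longrightarrow> x \<in> V \<and> y \<in> V)
     \<and> (\<forall>x y. E x y \<longrightarrow> E y x) \<and> (\<forall>x. \<not> E x x)"

definition reach_in :: "('a \<Rightarrow> 'a \<Rightarrow> bool) \<Rightarrow> 'a set \<Rightarrow> 'a \<Rightarrow> 'a \<Rightarrow> bool" where
  "reach_in E S = (\<lambda>x y. x \<in> S \<and> y \<in> S \<and> E x y)\<^sup>*\<^sup>*"

definition connected_graph :: "'a set \<Rightarrow> ('a \<Rightarrow> 'a \<Rightarrow> bool) \<Rightarrow> bool" where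
  "connected_graph V E \<longleftrightarrow> V \<noteq> {} \<and> (\<forall>x\<in>V. \<forall>y\<in>V. reach_in E V x y)"

definition complete_graph :: "'a set \<Rightarrow> ('a \<Rightarrow> 'a \<Rightarrow> bool) \<Rightarrow> bool" where
  "complete_graph V E \<longleftrightarrow> (\<forall>x\<in>V. \<forall>y\<in>V. x \<noteq> y \<longrightarrow> E x y)"

definition sides :: "'a set \<Rightarrow> ('a \<Rightarrow> 'a \<Rightarrow> bool) \<Rightarrow> 'a set \<Rightarrow> 'a set set" where
  "sides V E U = {{y \<in> V - U. reach_in E (V - U) x y} | x. x \<in> V - U}"

definition is_cut :: "'a set \<Rightarrow> ('a \<Rightarrow> 'a \<Rightarrow> bool) \<Rightarrow> 'a set \<Rightarrow> bool" where
  "is_cut V E U \<longleftrightarrow> U \<subseteq> V \<and> card (sides V E U) \<ge> 2"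

text \<open>Vertex connectivity (for non-complete graphs): minimum size of a cut.\<close>
definition connectivity :: "'a set \<Rightarrow> ('a \<Rightarrow> 'a \<Rightarrow> bool) \<Rightarrow> nat" where
  "connectivity V E = Min (card ` {U. is_cut V E U})"

definition I_small :: "'a set \<Rightarrow> ('a \<Rightarrow> 'a \<Rightarrow> bool) \<Rightarrow> 'a set \<Rightarrow> nat \<Rightarrow> bool" where
  "I_small V E U t \<longleftrightarrow> (\<exists>A0 \<in> sides V E U. (\<Sum>A \<in> sides V E U - {A0}. card A) \<le> t)"

definition laminar_cut :: "'a set \<Rightarrow> ('a \<Rightarrow> 'a \<Rightarrow> bool) \<Rightarrow> 'a set \<Rightarrow> 'a set \<Rightarrow> bool" where
  "laminar_cut V E U W \<longleftrightarrow> is_cut V E W \<and> (\<exists>A \<in> sides V E U. W \<subseteq> U \<union> A)"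

end

theory Submission
  imports Defs
begin

(* For a side A of U and a side B of W that meet, the set (U \<inter> W) \<union> (U \<inter> B) \<union> (A \<inter> W)
   separates A \<inter> B from W - U - A, so minimality of W gives |W - U - A| \<le> |U \<inter> B|.
   If W is not laminar, every W - U - A is nonempty, hence every side of W meets U, and any two
   sides B, B' of W satisfy |U \<inter> B| + |U \<inter> B'| \<le> |U - W| = |W - U|.  Adding the bounds for
   distinct sides A, A' of U crossing distinct sides B, B' of W forces W - U \<subseteq> A \<union> A', and a
   third side of U then gives a contradiction.  So all sides of W not contained in U cross one
   side A of U: if there are two of them, V - U - A \<subseteq> W and U is (I,\<kappa>-1)-small; otherwise all
   sides of W but one lie in U and W is (I,\<kappa>-1)-small. *)

lemma reach_in_sym:
  assumes "simple_graph V E" and "reach_in E S x y"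
  shows "reach_in E S y x"
proof -
  have "symp (\<lambda>x y. x \<in> S \<and> y \<in> S \<and> E x y)"
    using assms(1) unfolding simple_graph_def symp_def by blast
  then show ?thesis
    using assms(2) unfolding reach_in_def by (blast dest: sympD[OF symp_rtranclp])
qed

lemma reach_in_trans: "reach_in E S x y \<Longrightarrow> reach_in E S y z \<Longrightarrow> reach_in E S x z"
  unfolding reach_in_def by (rule rtranclp_trans)

lemma side_eq_component:
  assumes "simple_graph V E" and "A \<in> sides V E S" and "x \<in> A"
  shows "A = {y \<in> V - S. reach_in E (V - S) x y}"
proof -
  obtain z where z: "A = {y \<in> V - S. reach_in E (V - S) z y}"
    using assms(2) unfolding sides_def by blast
  then have "reach_in E (V - S) z x" and "reach_in E (V - S) x z"
    using assms(3) reach_in_sym[OF assms(1)] by auto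
  then show ?thesis
    unfolding z by (blast intro: reach_in_trans)
qed

lemma sides_disjoint:
  assumes "simple_graph V E" and "A \<in> sides V E S" and "B \<in> sides V E S" and "A \<noteq> B"
  shows "A \<inter> B = {}"
  using side_eq_component[OF assms(1,2)] side_eq_component[OF assms(1,3)] assms(4) by blast

lemma Union_sides: "\<Union>(sides V E S) = V - S"
  unfolding sides_def reach_in_def by blast

lemma empty_notin_sides: "{} \<notin> sides V E S"
  unfolding sides_def reach_in_def by blast

lemma finite_sides: "simple_graph V E \<Longrightarrow> finite (sides V E S)"
  unfolding simple_graph_def sides_def by (rule finite_subset[of _ "Pow V"]) auto

lemma finite_side: "simple_graph V E \<Longrightarrow> A \<in> sides V E S \<Longrightarrow> finite A"
proof -
  assume "simple_graph V E" and "A \<in> sides V E S"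
  then have "A \<subseteq> V" and "finite V"
    using Union_sides[of V E S] unfolding simple_graph_def by blast+
  then show "finite A"
    by (rule finite_subset)
qed

lemma side_closed:
  assumes "simple_graph V E" and "A \<in> sides V E S" and "a \<in> A" and "E a y" and "y \<notin> S"
  shows "y \<in> A"
proof -
  have "y \<in> V" and "a \<in> V - S"
    using assms Union_sides[of V E S] unfolding simple_graph_def by blast+
  then have "reach_in E (V - S) a y"
    using assms(4,5) unfolding reach_in_def by auto
  then show ?thesis
    using side_eq_component[OF assms(1-3)] \<open>y \<in> V\<close> assms(5) by auto
qed

lemma is_cutI:
  assumes g: "simple_graph V E" and "S \<subseteq> V" and "X \<subseteq> V - S" and x: "x \<in> X" and z: "z \<in> V - S - X"
    and closed: "\<And>a y. a \<in> X \<Longrightarrow> E a y \<Longrightarrow> y \<in> X \<union> S"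
  shows "is_cut V E S"
proof -
  obtain A B where A: "A \<in> sides V E S" "x \<in> A" and B: "B \<in> sides V E S" "z \<in> B"
    using assms(3) x z Union_sides[of V E S] by blast
  have "y \<in> X" if "reach_in E (V - S) x y" for y
    using that unfolding reach_in_def
    by (induction rule: rtranclp_induct) (use x closed in blast)+
  then have "A \<subseteq> X"
    using side_eq_component[OF g A] by blast
  then have "A \<noteq> B"
    using B z by blast
  moreover have "card {A, B} \<le> card (sides V E S)"
    using A B by (intro card_mono[OF finite_sides[OF g]]) auto
  ultimately have "2 \<le> card (sides V E S)"
    by simp
  then show ?thesis
    using assms(2) unfolding is_cut_def by blast
qed

lemma connectivity_le_card:
  assumes "simple_graph V E" and "is_cut V E S"
  shows "connectivity V E \<le> card S"
proof -
  have "finite (Pow V)"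
    using assms(1) unfolding simple_graph_def by simp
  moreover have "{U. is_cut V E U} \<subseteq> Pow V"
    unfolding is_cut_def by blast
  ultimately have "finite {U. is_cut V E U}"
    by (rule finite_subset[rotated])
  then show ?thesis
    unfolding connectivity_def using assms(2) by auto
qed

lemma sum_card_other_sides:
  assumes g: "simple_graph V E" and "A0 \<in> sides V E S"
  shows "(\<Sum>A \<in> sides V E S - {A0}. card A) = card (V - S - A0)"
proof -
  have "pairwise disjnt (sides V E S - {A0})"
    using sides_disjoint[OF g] unfolding pairwise_def disjnt_def by blast
  then have "card (\<Union>(sides V E S - {A0})) = (\<Sum>A \<in> sides V E S - {A0}. card A)"
    using finite_side[OF g] by (intro card_Union_disjoint) auto
  moreover have "\<Union>(sides V E S - {A0}) = \<Union>(sides V E S) - A0"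
    using sides_disjoint[OF g _ assms(2)] assms(2) by auto
  ultimately show ?thesis
    by (simp add: Union_sides)
qed

lemma I_smallI:
  assumes "simple_graph V E" and "A0 \<in> sides V E S" and "card (V - S - A0) \<le> t"
  shows "I_small V E S t"
  unfolding I_small_def using assms(2,3) sum_card_other_sides[OF assms(1,2)] by (intro bexI) auto

lemma card_Int_two_sides_le:
  assumes "simple_graph V E" and "finite T"
    and "B \<in> sides V E S" and "B' \<in> sides V E S" and "B \<noteq> B'"
  shows "card (T \<inter> B) + card (T \<inter> B') \<le> card (T - S)"
proof -
  have "card (T \<inter> B) + card (T \<inter> B') = card ((T \<inter> B) \<union> (T \<inter> B'))"
    using sides_disjoint[OF assms(1,3-5)] assms(2) by (intro card_Un_disjoint[symmetric]) auto
  also have "\<dots> \<le> card (T - S)"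
    using Union_sides[of V E S] assms(2-4) by (intro card_mono) auto
  finally show ?thesis .
qed

lemma card_ge_3_ex_other:
  assumes "3 \<le> card S"
  obtains c where "c \<in> S" and "c \<noteq> a" and "c \<noteq> b"
proof -
  have "\<not> S \<subseteq> {a, b}"
  proof
    assume "S \<subseteq> {a, b}"
    then have "card S \<le> card {a, b}"
      by (intro card_mono) simp_all
    also have "\<dots> \<le> 2"
      by (simp add: card_insert_if)
    finally show False
      using assms by simp
  qed
  then show ?thesis
    using that by blast
qed

lemma card_cut_outside_side_le:
  assumes g: "simple_graph V E" and "U \<subseteq> V" and "W \<subseteq> V" and "card W = connectivity V E"
    and A: "A \<in> sides V E U" and B: "B \<in> sides V E W" and "A \<inter> B \<noteq> {}"
  shows "card (W - U - A) \<le> card (U \<inter> B)"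
proof (cases "W - U - A = {}")
  case True
  show ?thesis
    unfolding True by simp
next
  case False
  then obtain z where z: "z \<in> W - U - A"
    by blast
  obtain x where x: "x \<in> A \<inter> B"
    using assms(7) by blast
  have A_sub: "A \<subseteq> V - U" and B_sub: "B \<subseteq> V - W"
    using A B Union_sides[of V E U] Union_sides[of V E W] by blast+
  define S where "S = (U \<inter> W) \<union> (U \<inter> B) \<union> (A \<inter> W)"
  have "is_cut V E S"
  proof (rule is_cutI[OF g _ _ x])
    show "S \<subseteq> V" and "A \<inter> B \<subseteq> V - S"
      using assms(2) A_sub B_sub unfolding S_def by blast+
    show "z \<in> V - S - A \<inter> B"
      using z assms(3) B_sub unfolding S_def by blast
    fix a y
    assume "a \<in> A \<inter> B" and "E a y"
    then have "y \<in> A \<or> y \<in> U" and "y \<in> B \<or> y \<in> W"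
      using side_closed[OF g A, of a y] side_closed[OF g B, of a y] by blast+
    then show "y \<in> A \<inter> B \<union> S"
      unfolding S_def by blast
  qed
  have fin: "finite V"
    using g unfolding simple_graph_def by simp
  have "W \<inter> (U \<union> A) \<union> U \<inter> B \<subseteq> V"
    using assms(2,3) by blast
  then have fin_union: "finite (W \<inter> (U \<union> A) \<union> U \<inter> B)"
    using fin by (rule finite_subset)
  have "card W \<le> card S"
    using connectivity_le_card[OF g \<open>is_cut V E S\<close>] assms(4) by simp
  also have "\<dots> \<le> card (W \<inter> (U \<union> A) \<union> U \<inter> B)"
    unfolding S_def by (rule card_mono[OF fin_union]) blast
  also have "\<dots> \<le> card (W \<inter> (U \<union> A)) + card (U \<inter> B)"
    by (rule card_Un_le)
  finally have "card W \<le> card (W \<inter> (U \<union> A)) + card (U \<inter> B)" .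
  moreover have "card W = card (W \<inter> (U \<union> A)) + card (W - (U \<union> A))"
    using finite_subset[OF assms(3) fin] by (rule card_Int_Diff)
  moreover have "card (W - (U \<union> A)) = card (W - U - A)"
    by (simp add: Diff_eq Int_assoc)
  ultimately show ?thesis
    by linarith
qed

locale crossing_min_cuts =
  fixes V :: "'a set" and E :: "'a \<Rightarrow> 'a \<Rightarrow> bool" and U W :: "'a set"
  assumes graph: "simple_graph V E"
    and cut_U: "is_cut V E U" and card_U: "card U = connectivity V E"
    and cut_W: "is_cut V E W" and card_W: "card W = connectivity V E"
    and not_laminar: "\<not> laminar_cut V E U W"
begin

lemma U_subset: "U \<subseteq> V" and W_subset: "W \<subseteq> V"
  using cut_U cut_W unfolding is_cut_def by simp_all

lemma finite_U: "finite U" and finite_W: "finite W"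
  using graph U_subset W_subset unfolding simple_graph_def by (auto intro: finite_subset)

lemma W_outside_side_nonempty: "A \<in> sides V E U \<Longrightarrow> W - U - A \<noteq> {}"
  using not_laminar cut_W unfolding laminar_cut_def by blast

lemma corner_bound:
  "A \<in> sides V E U \<Longrightarrow> B \<in> sides V E W \<Longrightarrow> A \<inter> B \<noteq> {} \<Longrightarrow> card (W - U - A) \<le> card (U \<inter> B)"
  by (rule card_cut_outside_side_le[OF graph U_subset W_subset card_W])

lemma side_of_W_meets_U:
  assumes B: "B \<in> sides V E W"
  shows "U \<inter> B \<noteq> {}"
proof -
  obtain b where b: "b \<in> B"
    using B empty_notin_sides by (metis all_not_in_conv)
  show ?thesis
  proof (cases "b \<in> U")
    case True
    then show ?thesis
      using b by blast
  next
    case False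
    then obtain A where A: "A \<in> sides V E U" "b \<in> A"
      using b B Union_sides[of V E U] Union_sides[of V E W] by blast
    have "0 < card (W - U - A)"
      using W_outside_side_nonempty[OF A(1)] finite_W by (simp add: card_gt_0_iff)
    also have "\<dots> \<le> card (U \<inter> B)"
      using corner_bound[OF A(1) B] A(2) b by blast
    finally show ?thesis
      by auto
  qed
qed

lemma card_Int_side_of_W_pos: "B \<in> sides V E W \<Longrightarrow> 0 < card (U \<inter> B)"
  using side_of_W_meets_U finite_U by (simp add: card_gt_0_iff)

lemma card_Int_two_sides_of_W_le:
  assumes "B \<in> sides V E W" and "B' \<in> sides V E W" and "B \<noteq> B'"
  shows "card (U \<inter> B) + card (U \<inter> B') \<le> card (W - U)"
proof -
  have "card (U - W) = card (W - U)"
    using finite_U finite_W card_U card_W by (intro antisym card_le_sym_Diff) simp_all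
  then show ?thesis
    using card_Int_two_sides_le[OF graph finite_U assms] by simp
qed

lemma W_minus_U_subset_crossing_sides:
  assumes A: "A \<in> sides V E U" and A': "A' \<in> sides V E U" and "A \<noteq> A'"
    and B: "B \<in> sides V E W" and B': "B' \<in> sides V E W" and "B \<noteq> B'"
    and "A \<inter> B \<noteq> {}" and "A' \<inter> B' \<noteq> {}"
  shows "W - U \<subseteq> A \<union> A'"
proof -
  have "A \<inter> A' = {}"
    using sides_disjoint[OF graph A A' assms(3)] .
  then have "(W - U - A) \<union> (W - U - A') = W - U" and "(W - U - A) \<inter> (W - U - A') = W - U - A - A'"
    by blast+
  then have "card (W - U - A) + card (W - U - A') = card (W - U) + card (W - U - A - A')"
    using card_Un_Int[of "W - U - A" "W - U - A'"] finite_W by simp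
  moreover have "card (W - U - A) + card (W - U - A') \<le> card (W - U)"
    using corner_bound[OF A B] corner_bound[OF A' B'] card_Int_two_sides_of_W_le[OF B B'] assms(6-8)
    by linarith
  ultimately have "card (W - U - A - A') = 0"
    by linarith
  then show ?thesis
    using finite_W by auto
qed

lemma crossing_sides_unique:
  assumes three: "3 \<le> card (sides V E U)"
    and A: "A \<in> sides V E U" and A': "A' \<in> sides V E U"
    and B: "B \<in> sides V E W" and B': "B' \<in> sides V E W" and "B \<noteq> B'"
    and "A \<inter> B \<noteq> {}" and "A' \<inter> B' \<noteq> {}"
  shows "A = A'"
proof (rule ccontr)
  assume "A \<noteq> A'"
  then have W_in_AA': "W - U \<subseteq> A \<union> A'"
    using W_minus_U_subset_crossing_sides assms(2-8) by blast
  obtain A3 where A3: "A3 \<in> sides V E U" "A3 \<noteq> A" "A3 \<noteq> A'"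
    using card_ge_3_ex_other[OF three] by blast
  obtain x where x: "x \<in> A3"
    using A3(1) empty_notin_sides by (metis all_not_in_conv)
  have A3_disj: "A3 \<inter> A = {}" "A3 \<inter> A' = {}"
    using sides_disjoint[OF graph A3(1)] A A' A3 by simp_all
  have "x \<in> V - W"
    using x A3(1) Union_sides[of V E U] A3_disj W_in_AA' by blast
  then obtain B'' where B'': "B'' \<in> sides V E W" "x \<in> B''"
    using Union_sides[of V E W] by blast
  have "W - U - A3 = W - U"
    using W_in_AA' A3_disj by blast
  then have bound: "card (W - U) \<le> card (U \<inter> B'')"
    using corner_bound[OF A3(1) B''(1)] x B''(2) by auto
  obtain B0 where B0: "B0 \<in> sides V E W" "B0 \<noteq> B''"
    using B B' \<open>B \<noteq> B'\<close> by blast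
  show False
    using card_Int_two_sides_of_W_le[OF B''(1) B0(1)] B0(2) card_Int_side_of_W_pos[OF B0(1)] bound
    by auto
qed

lemma side_of_W_outside_U_crosses:
  assumes "B \<in> sides V E W" and "\<not> B \<subseteq> U"
  obtains A where "A \<in> sides V E U" and "A \<inter> B \<noteq> {}"
proof -
  obtain b where "b \<in> B" and "b \<notin> U"
    using assms(2) by blast
  moreover have "B \<subseteq> V"
    using assms(1) Union_sides[of V E W] by blast
  ultimately show ?thesis
    using that Union_sides[of V E U] by blast
qed

lemma outside_doubly_crossed_side_subset_W:
  assumes three: "3 \<le> card (sides V E U)" and A: "A \<in> sides V E U"
    and B: "B \<in> sides V E W" and B': "B' \<in> sides V E W" and "B \<noteq> B'"
    and "A \<inter> B \<noteq> {}" and "A \<inter> B' \<noteq> {}"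
  shows "V - U - A \<subseteq> W"
proof
  fix v
  assume v: "v \<in> V - U - A"
  show "v \<in> W"
  proof (rule ccontr)
    assume "v \<notin> W"
    then obtain B'' where B'': "B'' \<in> sides V E W" "v \<in> B''"
      using v Union_sides[of V E W] by blast
    obtain A'' where A'': "A'' \<in> sides V E U" "v \<in> A''"
      using v Union_sides[of V E U] by blast
    obtain B0 where B0: "B0 \<in> {B, B'}" "B0 \<noteq> B''"
      using assms(5) by blast
    then have "A'' = A"
      using crossing_sides_unique[OF three A''(1) A B''(1), of B0] B B' assms(6,7) A''(2) B''(2) by blast
    then show False
      using v A''(2) by blast
  qed
qed

lemma U_small_if_two_sides_of_W_leave_U:
  assumes three: "3 \<le> card (sides V E U)"
    and B: "B \<in> sides V E W" and B': "B' \<in> sides V E W" and "B \<noteq> B'"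
    and "\<not> B \<subseteq> U" and "\<not> B' \<subseteq> U"
  shows "I_small V E U (connectivity V E - 1)"
proof -
  obtain A A' where A: "A \<in> sides V E U" "A \<inter> B \<noteq> {}" and A': "A' \<in> sides V E U" "A' \<inter> B' \<noteq> {}"
    using side_of_W_outside_U_crosses[OF B] side_of_W_outside_U_crosses[OF B'] assms(5,6) by metis
  have "A' = A"
    using crossing_sides_unique[OF three A'(1) A(1) B' B] assms(4) A(2) A'(2) by simp
  then have "V - U - A \<subseteq> W"
    using outside_doubly_crossed_side_subset_W[OF three A(1) B B' assms(4) A(2)] A'(2) by simp
  then have "card (V - U - A) \<le> card (W - U - A)"
    using finite_W by (intro card_mono) auto
  also have "\<dots> \<le> card (U \<inter> B)"
    using corner_bound[OF A(1) B A(2)] .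
  also have "\<dots> < card (W - U)"
    using card_Int_two_sides_of_W_le[OF B B' assms(4)] card_Int_side_of_W_pos[OF B'] by linarith
  also have "\<dots> \<le> card W"
    using finite_W by (intro card_mono) auto
  finally have "card (V - U - A) \<le> connectivity V E - 1"
    using card_W by linarith
  then show ?thesis
    by (rule I_smallI[OF graph A(1)])
qed

lemma W_small_if_one_side_of_W_leaves_U:
  assumes "\<forall>B \<in> sides V E W. \<forall>B' \<in> sides V E W. B \<subseteq> U \<or> B' \<subseteq> U \<or> B = B'"
  shows "I_small V E W (connectivity V E - 1)"
proof -
  have "sides V E W \<noteq> {}"
    using cut_W unfolding is_cut_def by auto
  then obtain B0 where B0: "B0 \<in> sides V E W" and others: "\<And>B. B \<in> sides V E W \<Longrightarrow> B \<noteq> B0 \<Longrightarrow> B \<subseteq> U"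
    using assms by blast
  have "V - W - B0 \<subseteq> U - W - B0"
    using others Union_sides[of V E W] by blast
  then have "card (V - W - B0) \<le> card (U - W - B0)"
    using finite_U by (intro card_mono) auto
  also have "\<dots> < card U"
    using side_of_W_meets_U[OF B0] finite_U by (intro psubset_card_mono) auto
  finally have "card (V - W - B0) \<le> connectivity V E - 1"
    using card_U by linarith
  then show ?thesis
    by (rule I_smallI[OF graph B0])
qed

end

theorem corollary1:
  fixes V :: "'a set" and E :: "'a \<Rightarrow> 'a \<Rightarrow> bool" and U W :: "'a set"
  assumes "simple_graph V E"
    and "connected_graph V E"
    and "\<not> complete_graph V E"
    and "4 * connectivity V E < card V"
    and "is_cut V E U" and "card U = connectivity V E"
    and "\<not> I_small V E U (connectivity V E - 1)"
    and "card (sides V E U) \<ge> 3"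
    and "is_cut V E W" and "card W = connectivity V E"
    and "W \<noteq> U"
  shows "laminar_cut V E U W \<or> I_small V E W (connectivity V E - 1)"
proof (cases "laminar_cut V E U W")
  case False
  then interpret crossing_min_cuts V E U W
    using assms by unfold_locales
  have "I_small V E W (connectivity V E - 1)"
  proof (rule W_small_if_one_side_of_W_leaves_U, intro ballI)
    fix B B'
    assume "B \<in> sides V E W" and "B' \<in> sides V E W"
    then show "B \<subseteq> U \<or> B' \<subseteq> U \<or> B = B'"
      using U_small_if_two_sides_of_W_leave_U assms(7,8) by blast
  qed
  then show ?thesis
    by simp
qed simp

end
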